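(* Let $X_0$ be a proper subshift of $X=\mathcal A^{\mathbb Z^d}$ and let $\mu$ be an ergodic shift-invariant measure supported on $X\setminus X_0$. Let $Y$ be the $\mathbb Z^d$-dyadic odometer with its unique invariant measure $\nu$, and let $\bar\mu$ be an ergodic joining of $\mu$ and $\nu$ for the product action $T^{\boldsymbol j}(x,y)=(\sigma^{\boldsymbol j}x,T_Y^{\boldsymbol j}y)$. Then there exists an equivariant tiling $\tau\colon X\times Y\to\mathcal T(\mathbb Z^d)$ such that: (1) for $\bar\mu$-a.e. $(x,y)$ and each $\boldsymbol j\in\mathbb Z^d$ there exists $n\in\mathbb N_0$ with $\tau^{(x,y)}(\boldsymbol j)=\tau^y_n(\boldsymbol j)$; (2) for $\bar\mu$-a.e. $(x,y)$ and each $\boldsymbol j$, if $\tau^{(x,y)}(\boldsymbol j)=\tau^y_n(\boldsymbol j)$ with $n>0$, then $x|_{\tau^{(x,y)}(\boldsymbol j)}\in\mathscr L(X_0)$; (3) for $\bar\mu$-a.e. $(x,y)$ and each $\boldsymbol j$, if $\tau^{(x,y)}(\boldsymbol j)=\tau^y_n(\boldsymbol j)$, then $x|_{\tau^y_{n+1}(\boldsymbol j)}\notin\mathscr L(X_0)$.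
   Context: $X=\mathcal A^{\mathbb Z^d}$ ($\mathcal A$ finite) with shift $(\sigma^{\boldsymbol n}x)_{\boldsymbol m}=x_{\boldsymbol n+\boldsymbol m}$; a subshift is a closed shift-invariant subset. For finite $S\subset\mathbb Z^d$, $x|_S\in\mathscr L(X_0)$ means the pattern $x|_S$ occurs (up to translation) in some point of $X_0$. A tiling of $\mathbb Z^d$ is a partition of $\mathbb Z^d$ into finite nonempty sets; $t(\boldsymbol j)$ denotes the tile containing $\boldsymbol j$; $\mathcal T(\mathbb Z^d)$ is the set of tilings; $\mathsf{Tr}_{\boldsymbol j}(t)=\{S-\boldsymbol j: S\in t\}$. For a $\mathbb Z^d$-action $T$ on $Z$, an equivariant tiling is a map $z\mapsto\tau^z\in\mathcal T(\mathbb Z^d)$ with $\tau^{T^{\boldsymbol j}z}=\mathsf{Tr}_{\boldsymbol j}(\tau^z)$. Dyadic odometer: $\Sigma=\{0,1\}^{\mathbb N_0}$, points written $\ldots y_2y_1y_0$, $\iota$ = addition of $1$ with carry to the left (so $\iota(\ldots111)=\ldots000$). For $y\in\Sigma$, $i\sim_{n,y}j$ if $\iota^i(y)$ and $\iota^j(y)$ agree in all coordinates of index $\ge n$. $Y=\Sigma^d$ with $T_Y^{\boldsymbol j}(y_1,\dots,y_d)=(\iota^{j_1}y_1,\dots,\iota^{j_d}y_d)$. For $y\in Y$, $n\in\mathbb N_0$, $\tau^y_n(\boldsymbol j)=\{\boldsymbol k\in\mathbb Z^d: j_i\sim_{n,y_i}k_i \text{ for } 1\le i\le d\}$ (a grid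 of $2^n\times\dots\times2^n$ boxes). *)

theory Defs
  imports "HOL-Probability.Probability"
begin

text \<open>Lattice Z^d is int^'d (d = CARD('d)). Configurations: int^'d \<Rightarrow> 'a with 'a finite.\<close>

definition shift :: "int^'d \<Rightarrow> (int^'d \<Rightarrow> 'a) \<Rightarrow> (int^'d \<Rightarrow> 'a)" where
  "shift n x = (\<lambda>m. x (n + m))"

definition shift_topology :: "(int^'d \<Rightarrow> 'a) topology" where
  "shift_topology = product_topology (\<lambda>_. discrete_topology UNIV) UNIV"

definition subshift :: "(int^'d \<Rightarrow> 'a::finite) set \<Rightarrow> bool" where
  "subshift X0 \<longleftrightarrow> closedin shift_topology X0 \<and> (\<forall>n. shift n ` X0 = X0)"

text \<open>Borel sigma-algebra of the full shift (= product sigma-algebra).\<close>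
definition MX :: "(int^'d \<Rightarrow> 'a) measure" where
  "MX = PiM UNIV (\<lambda>_. count_space UNIV)"

definition in_language :: "(int^'d \<Rightarrow> 'a) set \<Rightarrow> (int^'d \<Rightarrow> 'a) \<Rightarrow> (int^'d) set \<Rightarrow> bool" where
  "in_language X0 x S \<longleftrightarrow> (\<exists>z\<in>X0. \<exists>v. \<forall>s\<in>S. z (s + v) = x s)"

definition is_tiling :: "(int^'d) set set \<Rightarrow> bool" where
  "is_tiling t \<longleftrightarrow> (\<forall>S\<in>t. finite S \<and> S \<noteq> {}) \<and>
     (\<forall>S\<in>t. \<forall>S'\<in>t. S \<noteq> S' \<longrightarrow> S \<inter> S' = {}) \<and> \<Union>t = UNIV"

definition tile :: "(int^'d) set set \<Rightarrow> int^'d \<Rightarrow> (int^'d) set" where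
  "tile t j = (THE S. S \<in> t \<and> j \<in> S)"

definition Tr :: "int^'d \<Rightarrow> (int^'d) set set \<Rightarrow> (int^'d) set set" where
  "Tr j t = (\<lambda>S. (\<lambda>k. k - j) ` S) ` t"

text \<open>Dyadic odometer on nat \<Rightarrow> bool (coordinate 0 least significant).\<close>
definition iota :: "(nat \<Rightarrow> bool) \<Rightarrow> (nat \<Rightarrow> bool)" where
  "iota y = (\<lambda>n. if (\<forall>m<n. y m) then \<not> y n else y n)"

definition iota_inv :: "(nat \<Rightarrow> bool) \<Rightarrow> (nat \<Rightarrow> bool)" where
  "iota_inv y = (\<lambda>n. if (\<forall>m<n. \<not> y m) then \<not> y n else y n)"

definition iota_pow :: "int \<Rightarrow> (nat \<Rightarrow> bool) \<Rightarrow> (nat \<Rightarrow> bool)" where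
  "iota_pow i = (if i \<ge> 0 then iota ^^ nat i else iota_inv ^^ nat (- i))"

definition odo_rel :: "nat \<Rightarrow> (nat \<Rightarrow> bool) \<Rightarrow> int \<Rightarrow> int \<Rightarrow> bool" where
  "odo_rel n y i j \<longleftrightarrow> (\<forall>m\<ge>n. iota_pow i y m = iota_pow j y m)"

text \<open>Y = Sigma^d, points y :: 'd \<Rightarrow> nat \<Rightarrow> bool.\<close>
definition TY :: "int^'d \<Rightarrow> ('d \<Rightarrow> nat \<Rightarrow> bool) \<Rightarrow> ('d \<Rightarrow> nat \<Rightarrow> bool)" where
  "TY j y = (\<lambda>i. iota_pow (j $ i) (y i))"

definition MY :: "('d \<Rightarrow> nat \<Rightarrow> bool) measure" where
  "MY = PiM UNIV (\<lambda>_. PiM UNIV (\<lambda>_. count_space UNIV))"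

definition odo_tile :: "('d \<Rightarrow> nat \<Rightarrow> bool) \<Rightarrow> nat \<Rightarrow> int^'d \<Rightarrow> (int^'d) set" where
  "odo_tile y n j = {k. \<forall>i. odo_rel n (y i) (j $ i) (k $ i)}"

definition Tprod :: "int^'d \<Rightarrow> (int^'d \<Rightarrow> 'a) \<times> ('d \<Rightarrow> nat \<Rightarrow> bool)
     \<Rightarrow> (int^'d \<Rightarrow> 'a) \<times> ('d \<Rightarrow> nat \<Rightarrow> bool)" where
  "Tprod j p = (shift j (fst p), TY j (snd p))"

definition invariant_meas :: "'b measure \<Rightarrow> (int^'d \<Rightarrow> 'b \<Rightarrow> 'b) \<Rightarrow> bool" where
  "invariant_meas M T \<longleftrightarrow> (\<forall>j. T j \<in> M \<rightarrow>\<^sub>M M \<and>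
      (\<forall>A\<in>sets M. emeasure M (T j -` A \<inter> space M) = emeasure M A))"

definition ergodic_meas :: "'b measure \<Rightarrow> (int^'d \<Rightarrow> 'b \<Rightarrow> 'b) \<Rightarrow> bool" where
  "ergodic_meas M T \<longleftrightarrow> prob_space M \<and> invariant_meas M T \<and>
     (\<forall>A\<in>sets M. (\<forall>j. T j -` A \<inter> space M = A) \<longrightarrow> emeasure M A = 0 \<or> emeasure M A = 1)"

definition equivariant_tiling ::
  "(int^'d \<Rightarrow> 'b \<Rightarrow> 'b) \<Rightarrow> ('b \<Rightarrow> (int^'d) set set) \<Rightarrow> bool" where
  "equivariant_tiling T tau \<longleftrightarrow> (\<forall>z. is_tiling (tau z)) \<and> (\<forall>z j. tau (T j z) = Tr j (tau z))"

end

theory Submission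
  imports Defs
begin

text \<open>Read \<open>y\<close> digitwise: \<open>low n y\<close> is the integer with binary digits \<open>y 0, ..., y (n - 1)\<close>,
  and \<open>high n y\<close> is the tail from digit \<open>n\<close> on. Then \<open>iota_pow i\<close> adds \<open>i\<close> to \<open>low n y\<close> and
  passes the carry to \<open>high n y\<close>, so \<open>odo_tile y n j\<close> is a product of intervals of length \<open>2^n\<close>,
  strictly growing with \<open>n\<close>.

  The tile of \<open>j\<close> is the box \<open>odo_tile y n j\<close> for the least \<open>n\<close> such that the pattern of \<open>x\<close> on
  the box of level \<open>n + 1\<close> is not in the language of \<open>X0\<close>. As the boxes are nested and the
  language is closed under subpatterns, these boxes partition the lattice, and the construction
  commutes with the product action. Such an \<open>n\<close> exists for almost every \<open>(x, y)\<close>: \<open>x \<notin> X0\<close> is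
  witnessed by a finite window outside the language, and the boxes exhaust the lattice unless
  some \<open>y i\<close> is eventually constant. That is a null event, since the sets where the tail of
  \<open>y i\<close> from digit \<open>N\<close> equals \<open>iota ^^ k\<close> applied to the zero sequence, \<open>k = 0, 1, ...\<close>, are
  disjoint and are carried into one another by the measure-preserving translation by \<open>2^N\<close> in
  direction \<open>i\<close>.\<close>

section \<open>Integer division\<close>

lemma mod_div_add_multiple:
  fixes L M c :: int
  assumes "0 \<le> L" "L < M"
  shows "(L + c * M) mod M = L" "(L + c * M) div M = c"
  using assms by (simp_all add: mod_pos_pos_trivial div_pos_pos_trivial)

lemma div_carry:
  fixes a k M :: int
  shows "(a mod M + k) div M + a div M = (a + k) div M"
proof (cases "M = 0")
  case False
  have "a + k = (a mod M + k) + a div M * M"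
    using mod_div_mult_eq[of a M] by linarith
  with False show ?thesis
    by (metis div_mult_self1 add.commute)
qed simp

lemma div_eq_iff_bounds:
  fixes x q M :: int
  assumes "0 < M"
  shows "x div M = q \<longleftrightarrow> M * q \<le> x \<and> x < M * q + M"
proof
  assume "x div M = q"
  then have "M * q + x mod M = x"
    using mult_div_mod_eq[of M x] by simp
  then show "M * q \<le> x \<and> x < M * q + M"
    using pos_mod_bound[OF assms, of x] pos_mod_sign[OF assms, of x] by linarith
next
  assume "M * q \<le> x \<and> x < M * q + M"
  then have "(x - M * q + q * M) div M = q"
    by (intro mod_div_add_multiple) auto
  then show "x div M = q"
    by (simp add: mult.commute)
qed

lemma div_class_eq_interval:
  fixes L u M :: int
  assumes "0 < M"
  defines "c \<equiv> M * ((L + u) div M) - L"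
  shows "{v. (L + v) div M = (L + u) div M} = {c ..< c + M}"
proof (rule set_eqI)
  fix v
  show "v \<in> {v. (L + v) div M = (L + u) div M} \<longleftrightarrow> v \<in> {c ..< c + M}"
    unfolding mem_Collect_eq atLeastLessThan_iff div_eq_iff_bounds[OF assms(1)] c_def
    by linarith
qed

section \<open>The dyadic odometer\<close>

lemma iota_prefix: "(\<forall>k<n. \<not> iota y k) \<longleftrightarrow> (\<forall>k<n. y k)"
proof (induction n)
  case (Suc n)
  have "iota y n \<longleftrightarrow> (if \<forall>k<n. y k then \<not> y n else y n)"
    by (simp add: iota_def)
  with Suc show ?case
    by (simp add: less_Suc_eq) blast
qed simp

lemma iota_inv_prefix: "(\<forall>k<n. iota_inv y k) \<longleftrightarrow> (\<forall>k<n. \<not> y k)"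
proof (induction n)
  case (Suc n)
  have "iota_inv y n \<longleftrightarrow> (if \<forall>k<n. \<not> y k then \<not> y n else y n)"
    by (simp add: iota_inv_def)
  with Suc show ?case
    by (simp add: less_Suc_eq) blast
qed simp

lemma iota_iota_inv [simp]: "iota (iota_inv y) = y"
proof
  fix n
  show "iota (iota_inv y) n = y n"
    unfolding iota_def iota_inv_prefix by (simp add: iota_inv_def)
qed

lemma iota_inv_iota [simp]: "iota_inv (iota y) = y"
proof
  fix n
  show "iota_inv (iota y) n = y n"
    unfolding iota_inv_def iota_prefix by (simp add: iota_def)
qed

lemma inj_iota: "inj iota"
  by (metis injI iota_inv_iota)

lemma iota_const_True: "iota (\<lambda>_. True) = (\<lambda>_. False)"
  by (simp add: iota_def fun_eq_iff)

lemma iota_pow_0 [simp]: "iota_pow 0 y = y"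
  by (simp add: iota_pow_def)

lemma iota_pow_neg: "iota_pow (- int k) = iota_inv ^^ k"
  by (cases "k = 0") (simp_all add: iota_pow_def)

lemma iota_pow_plus1: "iota_pow (i + 1) y = iota (iota_pow i y)"
proof (cases "i \<ge> 0")
  case True
  then have "nat (i + 1) = Suc (nat i)" by simp
  with True show ?thesis by (simp add: iota_pow_def)
next
  case False
  define k where "k = nat (- i - 1)"
  have k: "i = - int (Suc k)" using False by (simp add: k_def)
  then have "i + 1 = - int k" by simp
  with k show ?thesis by (simp only: iota_pow_neg) simp
qed

lemma iota_pow_add: "iota_pow (a + b) y = iota_pow a (iota_pow b y)"
proof (induction a rule: int_induct[where k = 0])
  case (step1 i)
  have "iota_pow (i + 1 + b) y = iota_pow ((i + b) + 1) y"
    by (simp add: algebra_simps)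
  with step1 show ?case by (simp only: iota_pow_plus1)
next
  case (step2 i)
  have "iota (iota_pow (i - 1 + b) y) = iota (iota_pow (i - 1) (iota_pow b y))"
    using step2 iota_pow_plus1[of "i - 1 + b"] iota_pow_plus1[of "i - 1"] by simp
  then show ?case using inj_iota by (simp add: inj_eq)
qed simp

lemma iota_pow_1 [simp]: "iota_pow 1 y = iota y"
  using iota_pow_plus1[of 0] by simp

definition low :: "nat \<Rightarrow> (nat \<Rightarrow> bool) \<Rightarrow> int" where
  "low n y = (\<Sum>m<n. if y m then 2^m else 0)"

definition high :: "nat \<Rightarrow> (nat \<Rightarrow> bool) \<Rightarrow> (nat \<Rightarrow> bool)" where
  "high n y = (\<lambda>m. y (m + n))"

lemma low_0 [simp]: "low 0 y = 0"
  by (simp add: low_def)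

lemma low_Suc: "low (Suc n) y = low n y + (if y n then 2^n else 0)"
  by (simp add: low_def)

lemma low_nonneg: "0 \<le> low n y"
  by (simp add: low_def sum_nonneg)

lemma low_less: "low n y < 2^n"
proof (induction n)
  case (Suc n)
  then show ?case
    using zero_less_power[of "2::int" n] by (simp add: low_Suc del: zero_less_power)
qed simp

lemma low_eq_max_iff: "low n y = 2^n - 1 \<longleftrightarrow> (\<forall>m<n. y m)"
proof (induction n)
  case (Suc n)
  show ?case
    using Suc low_less[of n y] low_nonneg[of n y] by (auto simp: low_Suc less_Suc_eq)
qed simp

lemma low_iota: "low n (iota y) = (low n y + 1) mod 2^n"
proof (induction n)
  case (Suc n)
  have "iota y n = (if \<forall>m<n. y m then \<not> y n else y n)"
    by (simp add: iota_def)
  then show ?case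
    using Suc low_eq_max_iff[of n y] low_less[of n y] low_nonneg[of n y]
    by (auto simp: low_Suc)
qed simp

lemma high_iota: "high n (iota y) = iota_pow ((low n y + 1) div 2^n) (high n y)"
proof (cases "\<forall>k<n. y k")
  case True
  then have "low n y = 2^n - 1"
    using low_eq_max_iff by blast
  then have "(low n y + 1) div 2^n = 1"
    by simp
  moreover have "(\<forall>k<m + n. y k) \<longleftrightarrow> (\<forall>k<m. y (k + n))" for m
  proof
    assume high_ones: "\<forall>k<m. y (k + n)"
    show "\<forall>k<m + n. y k"
    proof (intro allI impI)
      fix k assume "k < m + n"
      then show "y k"
        using True high_ones[rule_format, of "k - n"] by (cases "k < n") auto
    qed
  qed simp
  ultimately show ?thesis
    by (simp add: fun_eq_iff high_def iota_def)
next
  case False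
  then have "low n y \<noteq> 2^n - 1"
    using low_eq_max_iff by blast
  then have "low n y + 1 < 2^n"
    using low_less[of n y] by linarith
  then have "(low n y + 1) div 2^n = 0"
    using low_nonneg by (simp add: div_pos_pos_trivial)
  moreover have "\<not> (\<forall>k<m + n. y k)" for m
    using False trans_less_add2 by blast
  ultimately show ?thesis
    by (simp add: fun_eq_iff high_def iota_def)
qed

lemma low_high_iota_pow_nat:
  "low n (iota_pow (int k) y) = (low n y + int k) mod 2^n \<and>
   high n (iota_pow (int k) y) = iota_pow ((low n y + int k) div 2^n) (high n y)"
proof (induction k arbitrary: y)
  case (Suc k)
  have carry: "((low n y + 1) mod 2^n + int k) div 2^n + (low n y + 1) div 2^n
      = (low n y + 1 + int k) div 2^n"
    by (rule div_carry)
  have step: "iota_pow (int (Suc k)) y = iota_pow (int k) (iota y)"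
    using iota_pow_add[of "int k" 1 y] by (simp add: add.commute)
  have sum: "low n y + int (Suc k) = low n y + 1 + int k"
    by simp
  have "low n (iota_pow (int k) (iota y)) = (low n y + 1 + int k) mod 2^n"
    using Suc[of "iota y"] by (simp add: low_iota mod_add_left_eq)
  moreover have "high n (iota_pow (int k) (iota y)) =
      iota_pow ((low n y + 1 + int k) div 2^n) (high n y)"
    using Suc[of "iota y"] carry by (simp add: low_iota high_iota iota_pow_add[symmetric])
  ultimately show ?case
    unfolding step sum by blast
next
  case 0
  show ?case
    using low_nonneg low_less by (simp add: mod_pos_pos_trivial div_pos_pos_trivial)
qed

lemma low_high_iota_pow_neg:
  "low n (iota_pow (- int k) y) = (low n y - int k) mod 2^n \<and>
   high n (iota_pow (- int k) y) = iota_pow ((low n y - int k) div 2^n) (high n y)"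
proof -
  define z where "z = iota_pow (- int k) y"
  define L where "L = low n z"
  define q where "q = (L + int k) div 2^n"
  have y: "y = iota_pow (int k) z"
    by (simp add: z_def iota_pow_add[symmetric])
  then have "low n y - int k = L + (- q) * 2^n"
    using low_high_iota_pow_nat[of n k z] by (simp add: L_def q_def minus_div_mult_eq_mod[symmetric])
  moreover have "0 \<le> L" "L < 2^n"
    unfolding L_def by (rule low_nonneg, rule low_less)
  ultimately have "(low n y - int k) mod 2^n = L" "(low n y - int k) div 2^n = - q"
    using mod_div_add_multiple[of L "2^n" "- q"] by simp_all
  moreover have "high n y = iota_pow q (high n z)"
    using y low_high_iota_pow_nat[of n k z] by (simp add: L_def q_def)
  ultimately show ?thesis
    by (simp add: z_def[symmetric] L_def iota_pow_add[symmetric])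
qed

lemma low_high_iota_pow:
  "low n (iota_pow i y) = (low n y + i) mod 2^n \<and>
   high n (iota_pow i y) = iota_pow ((low n y + i) div 2^n) (high n y)"
proof (cases "i \<ge> 0")
  case True
  then show ?thesis using low_high_iota_pow_nat[of n "nat i" y] by simp
next
  case False
  then show ?thesis using low_high_iota_pow_neg[of n "nat (- i)" y] by simp
qed

lemma iota_pow_eq_iff: "iota_pow a y = iota_pow b y \<longleftrightarrow> a = b"
proof
  assume eq: "iota_pow a y = iota_pow b y"
  define m where "m = nat \<bar>a - b\<bar>"
  have "(low m y + a) mod 2^m = (low m y + b) mod 2^m"
    using arg_cong[OF eq, of "low m"] low_high_iota_pow[of m] by simp
  then have "2^m dvd a - b"
    by (simp add: mod_eq_dvd_iff)
  moreover have "\<bar>a - b\<bar> < 2^m"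
    using of_nat_less_two_power[of m, where 'a = int] by (simp add: m_def)
  ultimately show "a = b"
    using dvd_imp_le_int[of "a - b" "2^m"] by fastforce
qed simp

lemma high_eq_iff: "high n f = high n g \<longleftrightarrow> (\<forall>m\<ge>n. f m = g m)"
proof
  assume "high n f = high n g"
  then have "f (k + n) = g (k + n)" for k
    by (simp add: high_def fun_eq_iff)
  then show "\<forall>m\<ge>n. f m = g m"
    by (metis le_add_diff_inverse2)
qed (simp add: high_def)

lemma high_iota_pow_2pow: "high N (iota_pow (2^N) h) = iota (high N h)"
proof -
  have "(low N h + 2^N) div 2^N = 1"
    using low_nonneg[of N h] low_less[of N h] by simp
  then show ?thesis
    using low_high_iota_pow[of N "2^N" h] by simp
qed

section \<open>Odometer boxes\<close>

lemma odo_rel_iff_div: "odo_rel n y u v \<longleftrightarrow> (low n y + u) div 2^n = (low n y + v) div 2^n"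
  by (simp add: odo_rel_def high_eq_iff[symmetric] low_high_iota_pow iota_pow_eq_iff)

lemma odo_rel_mono: "n \<le> m \<Longrightarrow> odo_rel n y u v \<Longrightarrow> odo_rel m y u v"
  by (simp add: odo_rel_def)

lemma odo_rel_class: "\<exists>c. {v. odo_rel n y u v} = {c ..< c + 2^n}"
proof -
  have "{v. odo_rel n y u v} = {v. (low n y + v) div 2^n = (low n y + u) div 2^n}"
    by (auto simp: odo_rel_iff_div)
  then show ?thesis
    using div_class_eq_interval[of "2^n" "low n y" u] by auto
qed

lemma card_odo_rel_class: "card {v. odo_rel n y u v} = 2^n"
proof -
  obtain c where "{v. odo_rel n y u v} = {c ..< c + 2^n}"
    using odo_rel_class by blast
  then show ?thesis
    by (simp add: nat_power_eq)
qed

lemma finite_vec_set: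
  assumes "\<And>i. finite (S i)"
  shows "finite {k :: 'a^'d. \<forall>i. k $ i \<in> S i}"
proof -
  have "{k :: 'a^'d. \<forall>i. k $ i \<in> S i} = vec_nth -` PiE UNIV S"
    by auto
  moreover have "inj vec_nth"
    by (rule injI) (simp add: vec_nth_inject)
  ultimately show ?thesis
    using assms finite_vimageI[of "PiE UNIV S" vec_nth] finite_PiE[of UNIV S] by simp
qed

lemma odo_tile_self: "j \<in> odo_tile y n j"
  by (simp add: odo_tile_def odo_rel_def)

lemma odo_tile_eq: "k \<in> odo_tile y n j \<Longrightarrow> odo_tile y n k = odo_tile y n j"
  by (auto simp: odo_tile_def odo_rel_def)

lemma odo_tile_mono: "n \<le> m \<Longrightarrow> odo_tile y n j \<subseteq> odo_tile y m j"
  by (auto simp: odo_tile_def odo_rel_def)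

lemma finite_odo_tile: "finite (odo_tile y n j)"
proof -
  have "finite {v. odo_rel n (y i) (j $ i) v}" for i
    using odo_rel_class[of n "y i" "j $ i"] by auto
  then show ?thesis
    using finite_vec_set[of "\<lambda>i. {v. odo_rel n (y i) (j $ i) v}"] by (simp add: odo_tile_def)
qed

lemma odo_tile_neq_Suc: "odo_tile y n j \<noteq> odo_tile y (Suc n) j"
proof
  assume eq: "odo_tile y n j = odo_tile y (Suc n) j"
  fix i
  \<comment> \<open>The slices through \<open>j\<close> along coordinate \<open>i\<close> are intervals of lengths \<open>2^n\<close>
    and \<open>2^(n+1)\<close>.\<close>
  have slice: "{v. odo_rel m (y i) (j $ i) v} = {v. (\<chi> l. if l = i then v else j $ l) \<in> odo_tile y m j}"
    for m
    by (auto simp: odo_tile_def odo_rel_def)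
  have "card {v. odo_rel n (y i) (j $ i) v} = card {v. odo_rel (Suc n) (y i) (j $ i) v}"
    unfolding slice eq ..
  then show False
    by (simp add: card_odo_rel_class)
qed

lemma image_minus_eq: "(\<lambda>k. k - a) ` S = {k. k + a \<in> (S :: 'a::group_add set)}"
proof (intro set_eqI iffI)
  fix k assume "k \<in> {k. k + a \<in> S}"
  then show "k \<in> (\<lambda>k. k - a) ` S"
    by (intro image_eqI[of _ _ "k + a"]) simp_all
qed auto

lemma odo_tile_TY: "odo_tile (TY a y) n k = (\<lambda>k. k - a) ` odo_tile y n (k + a)"
proof -
  have "k' \<in> odo_tile (TY a y) n k \<longleftrightarrow> k' + a \<in> odo_tile y n (k + a)" for k'
    by (simp add: odo_tile_def odo_rel_def TY_def iota_pow_add[symmetric] add.commute)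
  then show ?thesis
    by (auto simp: image_minus_eq)
qed

lemma rising_edge_between:
  assumes "\<not> h a" "h b" "a \<le> b"
  shows "\<exists>m\<ge>a. \<not> h m \<and> h (Suc m)"
  using assms
proof (induction b)
  case (Suc b)
  then show ?case
    by (cases "h b") (auto simp: le_Suc_eq)
qed simp

lemma eventually_odo_rel:
  assumes "\<forall>c. \<exists>\<^sub>F m in sequentially. h m \<noteq> c"
  shows "\<forall>\<^sub>F n in sequentially. odo_rel n h u v"
proof -
  define R where "R = nat (max \<bar>u\<bar> \<bar>v\<bar>)"
  obtain a where a: "a \<ge> R" "\<not> h a"
    using assms[rule_format, of True] by (auto simp: frequently_sequentially)
  obtain b where b: "b \<ge> a" "h b"
    using assms[rule_format, of False] by (auto simp: frequently_sequentially)
  obtain m where m: "m \<ge> R" "\<not> h m" "h (Suc m)"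
    using rising_edge_between[OF a(2) b(2,1)] a(1) le_trans by blast
  have "int m < 2^m"
    by simp
  then have bound: "\<bar>w\<bar> < 2^m" if "w = u \<or> w = v" for w
    using m(1) that unfolding R_def by linarith
  \<comment> \<open>The digits \<open>0, 1\<close> at \<open>m, m + 1\<close> absorb every carry caused by adding \<open>u\<close>
    or \<open>v\<close>.\<close>
  have "low (Suc (Suc m)) h = low m h + 2^Suc m"
    using m by (simp add: low_Suc)
  then have zero: "(low (Suc (Suc m)) h + w) div 2^Suc (Suc m) = 0" if "w = u \<or> w = v" for w
    using bound[OF that] low_nonneg[of m h] low_less[of m h] by (simp add: div_pos_pos_trivial)
  have "odo_rel (Suc (Suc m)) h u v"
    unfolding odo_rel_iff_div using zero by simp
  then show ?thesis
    unfolding eventually_sequentially by (blast intro: odo_rel_mono)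
qed

lemma finite_subset_odo_tile:
  assumes "\<forall>i c. \<exists>\<^sub>F m in sequentially. y i m \<noteq> c" and "finite F"
  shows "\<exists>n. F \<subseteq> odo_tile y n j"
proof -
  have "\<forall>\<^sub>F n in sequentially. \<forall>k\<in>F. \<forall>i. odo_rel n (y i) (j $ i) (k $ i)"
    using assms by (intro eventually_ball_finite ballI eventually_all_finite eventually_odo_rel) auto
  then obtain n where "\<forall>k\<in>F. \<forall>i. odo_rel n (y i) (j $ i) (k $ i)"
    unfolding eventually_sequentially by blast
  then show ?thesis
    unfolding odo_tile_def by blast
qed

section \<open>Stopping-time tiles\<close>

definition stop_level :: "(nat \<Rightarrow> 'b \<Rightarrow> 'b set) \<Rightarrow> ('b set \<Rightarrow> bool) \<Rightarrow> 'b \<Rightarrow> nat" where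
  "stop_level C Q j = (LEAST n. \<not> Q (C (Suc n) j))"

text \<open>If no box ever fails \<open>Q\<close>, the singleton \<open>{j}\<close> keeps the tiles a partition.\<close>

definition stop_tile :: "(nat \<Rightarrow> 'b \<Rightarrow> 'b set) \<Rightarrow> ('b set \<Rightarrow> bool) \<Rightarrow> 'b \<Rightarrow> 'b set" where
  "stop_tile C Q j = (if \<exists>n. \<not> Q (C (Suc n) j) then C (stop_level C Q j) j else {j})"

locale nested_partitions =
  fixes C :: "nat \<Rightarrow> 'b \<Rightarrow> 'b set"
  assumes finite_class: "finite (C n j)"
    and class_self: "j \<in> C n j"
    and class_eq: "k \<in> C n j \<Longrightarrow> C n k = C n j"
    and class_grows: "C n j \<subset> C (Suc n) j"
begin

lemma class_mono: "n \<le> m \<Longrightarrow> C n j \<subseteq> C m j"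
  using lift_Suc_mono_le[of "\<lambda>n. C n j"] class_grows by blast

lemma class_inj: "C n j = C m j \<Longrightarrow> n = m"
  using lift_Suc_mono_less[of "\<lambda>n. C n j"] class_grows by (metis linorder_cases less_irrefl)

lemma stop_tile_self: "j \<in> stop_tile C Q j"
  by (simp add: stop_tile_def class_self)

lemma finite_stop_tile: "finite (stop_tile C Q j)"
  by (simp add: stop_tile_def finite_class)

context
  fixes Q j
  assumes stops: "\<exists>n. \<not> Q (C (Suc n) j)"
begin

lemma stop_tile_stopped: "stop_tile C Q j = C (stop_level C Q j) j"
  using stops by (simp add: stop_tile_def)

lemma not_Q_above_stop_level: "\<not> Q (C (Suc (stop_level C Q j)) j)"
  unfolding stop_level_def using stops by (rule LeastI_ex)

lemma Q_stop_tile: "0 < stop_level C Q j \<Longrightarrow> Q (stop_tile C Q j)"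
  using not_less_Least[of "stop_level C Q j - 1" "\<lambda>n. \<not> Q (C (Suc n) j)"]
  by (simp add: stop_tile_stopped stop_level_def)

lemma stop_tile_eq_class_iff: "stop_tile C Q j = C n j \<longleftrightarrow> n = stop_level C Q j"
  using class_inj by (auto simp: stop_tile_stopped)

end

lemma stop_tile_eq:
  assumes Q: "antimono Q" and k: "k \<in> stop_tile C Q j"
  shows "stop_tile C Q k = stop_tile C Q j"
proof (cases "\<exists>n. \<not> Q (C (Suc n) j)")
  case True
  define n0 where "n0 = stop_level C Q j"
  have k_class: "k \<in> C n0 j"
    using k True by (simp add: stop_tile_stopped n0_def)
  have same: "C m k = C m j" if "n0 \<le> m" for m
    using class_eq class_mono[OF that] k_class by blast
  have stop_k: "\<not> Q (C (Suc n0) k)"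
    using not_Q_above_stop_level[OF True] same[of "Suc n0"] by (simp add: n0_def)
  have "Q (C (Suc n) k)" if "n < n0" for n
  proof -
    have "C (Suc n) k \<subseteq> C n0 j"
      using class_mono[of "Suc n" n0 k] same[of n0] that by simp
    moreover have "Q (C n0 j)"
      using Q_stop_tile[OF True] that by (simp add: stop_tile_stopped[OF True] n0_def)
    ultimately show ?thesis
      using Q by (metis antimonoD le_boolD)
  qed
  then have "stop_level C Q k = n0"
    unfolding stop_level_def using stop_k by (intro Least_equality) (auto simp: not_less[symmetric])
  moreover have "stop_tile C Q k = C (stop_level C Q k) k"
    using stop_k by (intro stop_tile_stopped) blast
  ultimately show ?thesis
    using same[of n0] stop_tile_stopped[OF True] by (simp add: n0_def)
next
  case False
  then show ?thesis
    using k by (simp add: stop_tile_def)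
qed

end

lemma stop_tile_translate:
  fixes a :: "'b::group_add"
  assumes C: "\<And>n k. C' n k = (\<lambda>k. k - a) ` C n (k + a)"
    and Q: "\<And>S. Q' ((\<lambda>k. k - a) ` S) = Q S"
  shows "stop_tile C' Q' k = (\<lambda>k. k - a) ` stop_tile C Q (k + a)"
proof -
  have "Q' (C' n k) = Q (C n (k + a))" for n
    by (simp add: C Q)
  then show ?thesis
    by (simp add: stop_tile_def stop_level_def C)
qed

lemma is_tiling_range:
  assumes "\<And>j. finite (T j)" "\<And>j. j \<in> T j" "\<And>j k. k \<in> T j \<Longrightarrow> T k = T j"
  shows "is_tiling (range T)"
  unfolding is_tiling_def using assms by blast

lemma tile_range:
  assumes "\<And>j. j \<in> T j" "\<And>j k. k \<in> T j \<Longrightarrow> T k = T j"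
  shows "tile (range T) j = T j"
  unfolding tile_def
proof (rule the_equality)
  show "T j \<in> range T \<and> j \<in> T j"
    using assms(1) by blast
next
  fix S assume "S \<in> range T \<and> j \<in> S"
  then obtain i where "S = T i" "j \<in> T i"
    by blast
  then show "S = T j"
    using assms(2)[of j i] by simp
qed

lemma Tr_range: "Tr a (range T) = range (\<lambda>k. (\<lambda>k. k - a) ` T (k + a))"
proof -
  let ?F = "\<lambda>j. (\<lambda>k. k - a) ` T j"
  have "surj (\<lambda>k. k + a)"
    by (rule surjI[of _ "\<lambda>k. k - a"]) simp
  then have "range (\<lambda>k. ?F (k + a)) = range ?F"
    using image_image[of ?F "\<lambda>k. k + a" UNIV] by simp
  then show ?thesis
    by (simp add: Tr_def image_image)
qed

section \<open>Patterns and the tiling\<close>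

lemma antimono_in_language: "antimono (in_language X0 x)"
  by (rule antimonoI) (auto simp: in_language_def)

lemma in_language_shift:
  "in_language X0 (shift a x) ((\<lambda>k. k - a) ` S) \<longleftrightarrow> in_language X0 x S"
proof -
  have "in_language X0 (shift a x) ((\<lambda>k. k - a) ` S) \<longleftrightarrow>
      (\<exists>z\<in>X0. \<exists>v. \<forall>s\<in>S. z (s + (v - a)) = x s)"
    by (simp add: in_language_def shift_def algebra_simps)
  also have "\<dots> \<longleftrightarrow> in_language X0 x S"
  proof -
    have "(\<exists>v. \<forall>s\<in>S. z (s + (v - a)) = x s) \<longleftrightarrow> (\<exists>v. \<forall>s\<in>S. z (s + v) = x s)" for z
    proof
      assume "\<exists>v. \<forall>s\<in>S. z (s + v) = x s"
      then obtain v where "\<forall>s\<in>S. z (s + v) = x s" ..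
      then show "\<exists>v. \<forall>s\<in>S. z (s + (v - a)) = x s"
        by (intro exI[of _ "v + a"]) simp
    qed blast
    then show ?thesis
      by (simp add: in_language_def)
  qed
  finally show ?thesis .
qed

lemma not_in_language_window:
  assumes X0: "subshift X0" and x: "x \<notin> X0"
  shows "\<exists>F. finite F \<and> \<not> in_language X0 x F"
proof -
  have "openin shift_topology (UNIV - X0)"
    using X0 by (simp add: subshift_def closedin_def shift_topology_def)
  then have "\<exists>U. finite {i. U i \<noteq> UNIV} \<and> x \<in> PiE UNIV U \<and> PiE UNIV U \<subseteq> UNIV - X0"
    using x unfolding shift_topology_def openin_product_topology_alt by auto
  then obtain U where U: "finite {i. U i \<noteq> UNIV}" "x \<in> PiE UNIV U" "PiE UNIV U \<subseteq> UNIV - X0"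
    by blast
  define F where "F = {i. U i \<noteq> UNIV}"
  have "\<not> in_language X0 x F"
  proof
    assume "in_language X0 x F"
    then obtain z v where z: "z \<in> X0" "\<forall>s\<in>F. z (s + v) = x s"
      unfolding in_language_def by blast
    have "shift v z \<in> X0"
      using X0 z(1) unfolding subshift_def by blast
    moreover have "shift v z i \<in> U i" for i
      using z(2) U(2) by (cases "i \<in> F") (auto simp: shift_def add.commute F_def)
    ultimately show False
      using U(3) by blast
  qed
  then show ?thesis
    using U(1) F_def by blast
qed

lemma nested_partitions_odo_tile: "nested_partitions (odo_tile y)"
  by unfold_locales
    (auto simp: finite_odo_tile odo_tile_self odo_tile_eq psubset_eq odo_tile_mono odo_tile_neq_Suc)

definition language_tiling ::
  "(int^'d \<Rightarrow> 'a) set \<Rightarrow> (int^'d \<Rightarrow> 'a) \<times> ('d \<Rightarrow> nat \<Rightarrow> bool) \<Rightarrow> (int^'d) set set"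
  where "language_tiling X0 p = range (stop_tile (odo_tile (snd p)) (in_language X0 (fst p)))"

lemma tile_language_tiling:
  "tile (language_tiling X0 p) j = stop_tile (odo_tile (snd p)) (in_language X0 (fst p)) j"
proof -
  interpret nested_partitions "odo_tile (snd p)"
    by (rule nested_partitions_odo_tile)
  show ?thesis
    unfolding language_tiling_def
    by (rule tile_range[OF stop_tile_self stop_tile_eq[OF antimono_in_language]])
qed

lemma equivariant_language_tiling:
  fixes X0 :: "(int^'d \<Rightarrow> 'a) set"
  shows "equivariant_tiling Tprod (language_tiling X0)"
  unfolding equivariant_tiling_def
proof (intro conjI allI)
  fix p :: "(int^'d \<Rightarrow> 'a) \<times> ('d \<Rightarrow> nat \<Rightarrow> bool)"
  interpret nested_partitions "odo_tile (snd p)"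
    by (rule nested_partitions_odo_tile)
  show "is_tiling (language_tiling X0 p)"
    unfolding language_tiling_def
    by (rule is_tiling_range[OF finite_stop_tile stop_tile_self stop_tile_eq[OF antimono_in_language]])
  fix a
  have "stop_tile (odo_tile (TY a (snd p))) (in_language X0 (shift a (fst p))) =
      (\<lambda>k. (\<lambda>k. k - a) ` stop_tile (odo_tile (snd p)) (in_language X0 (fst p)) (k + a))"
    by (intro ext stop_tile_translate odo_tile_TY in_language_shift)
  then show "language_tiling X0 (Tprod a p) = Tr a (language_tiling X0 p)"
    by (simp add: language_tiling_def Tprod_def Tr_range)
qed

lemma language_tiling_properties:
  assumes X0: "subshift X0" and x: "fst p \<notin> X0"
    and y: "\<forall>i c. \<exists>\<^sub>F m in sequentially. snd p i m \<noteq> c"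
  shows "(\<forall>j. \<exists>n. tile (language_tiling X0 p) j = odo_tile (snd p) n j) \<and>
    (\<forall>j n. tile (language_tiling X0 p) j = odo_tile (snd p) n j \<and> n > 0
        \<longrightarrow> in_language X0 (fst p) (tile (language_tiling X0 p) j)) \<and>
    (\<forall>j n. tile (language_tiling X0 p) j = odo_tile (snd p) n j
        \<longrightarrow> \<not> in_language X0 (fst p) (odo_tile (snd p) (Suc n) j))"
proof -
  interpret nested_partitions "odo_tile (snd p)"
    by (rule nested_partitions_odo_tile)
  let ?Q = "in_language X0 (fst p)"
  obtain F where F: "finite F" "\<not> ?Q F"
    using not_in_language_window[OF X0 x] by blast
  have stops: "\<exists>n. \<not> ?Q (odo_tile (snd p) (Suc n) j)" for j
  proof -
    obtain n where "F \<subseteq> odo_tile (snd p) n j"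
      using finite_subset_odo_tile[OF y F(1)] by blast
    then have "F \<subseteq> odo_tile (snd p) (Suc n) j"
      using class_mono[of n "Suc n"] by auto
    then show ?thesis
      using F(2) antimono_in_language by (metis antimonoD le_boolD)
  qed
  let ?T = "stop_tile (odo_tile (snd p)) ?Q"
  show ?thesis
    unfolding tile_language_tiling
  proof (intro conjI allI impI)
    fix j
    show "\<exists>n. ?T j = odo_tile (snd p) n j"
      using stop_tile_stopped[OF stops] by blast
  next
    fix j n
    assume "?T j = odo_tile (snd p) n j \<and> 0 < n"
    then show "?Q (?T j)"
      using stop_tile_eq_class_iff[OF stops] Q_stop_tile[OF stops] by auto
  next
    fix j n
    assume "?T j = odo_tile (snd p) n j"
    then show "\<not> ?Q (odo_tile (snd p) (Suc n) j)"
      using stop_tile_eq_class_iff[OF stops] not_Q_above_stop_level[OF stops] by auto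
  qed
qed

section \<open>Null sets of the odometer measure\<close>

lemma (in finite_measure) measure_eq_0_if_disjoint_copies:
  fixes A :: "nat \<Rightarrow> 'a set"
  assumes "disjoint_family A" "range A \<subseteq> sets M" "\<And>k. measure M (A k) = measure M (A 0)"
  shows "measure M (A 0) = 0"
proof -
  have "summable (\<lambda>k. measure M (A k))"
    using finite_measure_UNION[OF assms(2,1)] by (rule sums_summable)
  moreover have "(\<lambda>k. measure M (A k)) = (\<lambda>_. measure M (A 0))"
    using assms(3) by (rule ext)
  ultimately show ?thesis
    by (simp add: summable_const_iff)
qed

lemma space_MY: "space MY = UNIV"
  by (simp add: MY_def space_PiM)

lemma sets_high_eq: "{y :: 'd \<Rightarrow> nat \<Rightarrow> bool. high N (y i) = w} \<in> sets MY"
proof -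
  have "(\<lambda>y :: 'd \<Rightarrow> nat \<Rightarrow> bool. y i) \<in> MY \<rightarrow>\<^sub>M PiM UNIV (\<lambda>_. count_space UNIV)"
    unfolding MY_def by (rule measurable_component_singleton) simp
  moreover have "(\<lambda>f :: nat \<Rightarrow> bool. f m) \<in> PiM UNIV (\<lambda>_. count_space UNIV) \<rightarrow>\<^sub>M count_space UNIV" for m
    by (rule measurable_component_singleton) simp
  ultimately have "(\<lambda>y :: 'd \<Rightarrow> nat \<Rightarrow> bool. y i m) \<in> MY \<rightarrow>\<^sub>M count_space UNIV" for m
    by (rule measurable_compose)
  then have "Measurable.pred MY (\<lambda>y :: 'd \<Rightarrow> nat \<Rightarrow> bool. \<forall>m. y i (m + N) = w m)"
    by (intro pred_intros_countable pred_count_space_const1)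
  moreover have "{y :: 'd \<Rightarrow> nat \<Rightarrow> bool. high N (y i) = w} = {y \<in> space MY. \<forall>m. y i (m + N) = w m}"
    by (auto simp: space_MY high_def fun_eq_iff)
  ultimately show ?thesis
    by (simp add: pred_def)
qed

lemma AE_high_neq_const:
  fixes \<nu> :: "('d::finite \<Rightarrow> nat \<Rightarrow> bool) measure"
  assumes sets: "sets \<nu> = sets MY" and "prob_space \<nu>" and inv: "invariant_meas \<nu> TY"
  shows "AE y in \<nu>. high N (y i) \<noteq> (\<lambda>_. c)"
proof -
  interpret prob_space \<nu> by fact
  define a :: "int^'d" where "a = (\<chi> l. if l = i then 2^N else 0)"
  define H where "H w = {y :: 'd \<Rightarrow> nat \<Rightarrow> bool. high N (y i) = w}" for w
  have H_sets: "H w \<in> sets \<nu>" for w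
    unfolding H_def sets by (rule sets_high_eq)
  have "TY a -` H (iota w) \<inter> space \<nu> = H w" for w
    using sets_eq_imp_space_eq[OF sets] inj_iota
    by (auto simp: H_def space_MY TY_def a_def high_iota_pow_2pow inj_eq)
  then have H_iota: "measure \<nu> (H (iota w)) = measure \<nu> (H w)" for w
    using inv H_sets unfolding invariant_meas_def measure_def by metis
  define D where "D k = H ((iota ^^ k) (\<lambda>_. False))" for k
  have "measure \<nu> (D k) = measure \<nu> (D 0)" for k
    by (induction k) (simp_all add: D_def H_iota)
  moreover have "disjoint_family D"
  proof -
    have distinct: "(iota ^^ m) w = (iota ^^ n) w \<Longrightarrow> m = n" for m n w
      using iota_pow_eq_iff[of "int m" w "int n"] by (simp add: iota_pow_def)
    then show ?thesis
      unfolding disjoint_family_on_def D_def H_def by (auto dest: distinct)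
  qed
  ultimately have "measure \<nu> (H (\<lambda>_. False)) = 0"
    using measure_eq_0_if_disjoint_copies[of D] H_sets by (auto simp: D_def)
  moreover have "measure \<nu> (H (\<lambda>_. True)) = 0"
    using calculation H_iota[of "\<lambda>_. True"] by (simp add: iota_const_True)
  ultimately have "H (\<lambda>_. c) \<in> null_sets \<nu>"
    using H_sets by (cases c) (simp_all add: null_sets_def emeasure_eq_measure)
  then show ?thesis
    by (rule AE_I') (auto simp: H_def)
qed

lemma AE_not_eventually_const:
  fixes \<nu> :: "('d::finite \<Rightarrow> nat \<Rightarrow> bool) measure"
  assumes "sets \<nu> = sets MY" and "prob_space \<nu>" and "invariant_meas \<nu> TY"
  shows "AE y in \<nu>. \<forall>i c. \<exists>\<^sub>F m in sequentially. y i m \<noteq> c"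
proof -
  have "AE y in \<nu>. \<forall>i N c. high N (y i) \<noteq> (\<lambda>_. c)"
    using AE_high_neq_const[OF assms] by (simp add: AE_all_countable)
  then show ?thesis
  proof (rule eventually_mono)
    fix y :: "'d \<Rightarrow> nat \<Rightarrow> bool"
    assume "\<forall>i N c. high N (y i) \<noteq> (\<lambda>_. c)"
    then have "\<not> (\<forall>m\<ge>N. y i m = c)" for i N c
      using high_eq_iff[of N "y i" "\<lambda>_. c"] by (simp add: high_def)
    then show "\<forall>i c. \<exists>\<^sub>F m in sequentially. y i m \<noteq> c"
      by (simp add: frequently_def eventually_sequentially)
  qed
qed

lemma AE_fst_of_distr:
  assumes "sets M = sets (M1 \<Otimes>\<^sub>M M2)" and "AE x in distr M M1 fst. P x"
  shows "AE p in M. P (fst p)"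
proof -
  have "fst \<in> M \<rightarrow>\<^sub>M M1"
    unfolding measurable_cong_sets[OF assms(1) refl] by (rule measurable_fst)
  then show ?thesis
    using assms(2) by (rule AE_distrD)
qed

lemma AE_snd_of_distr:
  assumes "sets M = sets (M1 \<Otimes>\<^sub>M M2)" and "AE y in distr M M2 snd. P y"
  shows "AE p in M. P (snd p)"
proof -
  have "snd \<in> M \<rightarrow>\<^sub>M M2"
    unfolding measurable_cong_sets[OF assms(1) refl] by (rule measurable_snd)
  then show ?thesis
    using assms(2) by (rule AE_distrD)
qed

theorem lemma3p4:
  fixes X0 :: "(int^'d \<Rightarrow> 'a::finite) set"
    and \<mu> :: "(int^'d \<Rightarrow> 'a) measure"
    and \<nu> :: "('d \<Rightarrow> nat \<Rightarrow> bool) measure"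
    and \<mu>bar :: "((int^'d \<Rightarrow> 'a) \<times> ('d \<Rightarrow> nat \<Rightarrow> bool)) measure"
  assumes "subshift X0" and "X0 \<noteq> UNIV"
    and "sets \<mu> = sets MX" and "ergodic_meas \<mu> shift"
    and "emeasure \<mu> (UNIV - X0) = 1"
    and "sets \<nu> = sets MY" and "prob_space \<nu>" and "invariant_meas \<nu> TY"
    and "sets \<mu>bar = sets (MX \<Otimes>\<^sub>M MY)" and "ergodic_meas \<mu>bar Tprod"
    and "distr \<mu>bar MX fst = \<mu>" and "distr \<mu>bar MY snd = \<nu>"
  shows "\<exists>\<tau>. equivariant_tiling Tprod \<tau> \<and>
    (AE p in \<mu>bar. \<forall>j. \<exists>n. tile (\<tau> p) j = odo_tile (snd p) n j) \<and>
    (AE p in \<mu>bar. \<forall>j n. tile (\<tau> p) j = odo_tile (snd p) n j \<and> n > 0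
        \<longrightarrow> in_language X0 (fst p) (tile (\<tau> p) j)) \<and>
    (AE p in \<mu>bar. \<forall>j n. tile (\<tau> p) j = odo_tile (snd p) n j
        \<longrightarrow> \<not> in_language X0 (fst p) (odo_tile (snd p) (Suc n) j))"
proof -
  have "prob_space \<mu>"
    using \<open>ergodic_meas \<mu> shift\<close> by (simp add: ergodic_meas_def)
  moreover have "UNIV - X0 \<in> sets \<mu>"
    using \<open>emeasure \<mu> (UNIV - X0) = 1\<close> emeasure_notin_sets by force
  ultimately have "AE x in \<mu>. x \<notin> X0"
    using \<open>emeasure \<mu> (UNIV - X0) = 1\<close> prob_space.AE_in_set_eq_1[of \<mu> "UNIV - X0"]
    by (simp add: measure_def)
  then have x: "AE p in \<mu>bar. fst p \<notin> X0"
    unfolding \<open>distr \<mu>bar MX fst = \<mu>\<close>[symmetric] by (rule AE_fst_of_distr[OF \<open>sets \<mu>bar = _\<close>])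
  have "AE y in \<nu>. \<forall>i c. \<exists>\<^sub>F m in sequentially. y i m \<noteq> c"
    using \<open>sets \<nu> = sets MY\<close> \<open>prob_space \<nu>\<close> \<open>invariant_meas \<nu> TY\<close>
    by (rule AE_not_eventually_const)
  then have y: "AE p in \<mu>bar. \<forall>i c. \<exists>\<^sub>F m in sequentially. snd p i m \<noteq> c"
    unfolding \<open>distr \<mu>bar MY snd = \<nu>\<close>[symmetric] by (rule AE_snd_of_distr[OF \<open>sets \<mu>bar = _\<close>])
  from x y have "AE p in \<mu>bar.
    (\<forall>j. \<exists>n. tile (language_tiling X0 p) j = odo_tile (snd p) n j) \<and>
    (\<forall>j n. tile (language_tiling X0 p) j = odo_tile (snd p) n j \<and> n > 0
        \<longrightarrow> in_language X0 (fst p) (tile (language_tiling X0 p) j)) \<and>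
    (\<forall>j n. tile (language_tiling X0 p) j = odo_tile (snd p) n j
        \<longrightarrow> \<not> in_language X0 (fst p) (odo_tile (snd p) (Suc n) j))"
    by eventually_elim (rule language_tiling_properties[OF \<open>subshift X0\<close>])
  then show ?thesis
    using equivariant_language_tiling unfolding AE_conj_iff by blast
qed

end
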